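(* Let $\phi:K\to L$ be a continuous surjection between compact Hausdorff spaces, and assume $\phi$ admits a regular averaging operator, i.e., a bounded linear operator $P:C(K)\to C(L)$ with $P(f\circ\phi)=f$ for all $f\in C(L)$ and $\|P\|\le1$. If $K$ has the extension property (resp. the regular extension property), then $L$ has the extension property (resp. the regular extension property).
   Context: $C(K)$ is the Banach space of real-valued continuous functions on $K$ with the supremum norm and $\mathbf 1_K$ its unit. For a closed $F\subseteq K$, an extension operator for $F$ in $K$ is a bounded linear map $E:C(F)\to C(K)$ with $E(f)|_F=f$ for all $f\in C(F)$; it is regular if $\|E\|\le1$ and $E(\mathbf 1_F)=\mathbf 1_K$. $K$ has the (regular) extension property if every nonempty closed subset of $K$ admits a (regular) extension operator in $K$. *)

theory Defs
  imports "HOL-Analysis.Analysis"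
begin

text \<open>C(X) is represented by the real-valued continuous maps on the topological
space X; functions are only ever evaluated on topspace X.\<close>

abbreviation CX :: "'a topology \<Rightarrow> ('a \<Rightarrow> real) set" where
  "CX X \<equiv> {f. continuous_map X euclideanreal f}"

definition supnorm :: "'a topology \<Rightarrow> ('a \<Rightarrow> real) \<Rightarrow> real" where
  "supnorm X f = (if topspace X = {} then 0 else (SUP x\<in>topspace X. \<bar>f x\<bar>))"

definition bounded_linear_op ::
  "'a topology \<Rightarrow> 'b topology \<Rightarrow> (('a \<Rightarrow> real) \<Rightarrow> ('b \<Rightarrow> real)) \<Rightarrow> bool" where
  "bounded_linear_op X Y T \<longleftrightarrow>
     (\<forall>f\<in>CX X. T f \<in> CX Y) \<and>
     (\<forall>f\<in>CX X. \<forall>g\<in>CX X. \<forall>y\<in>topspace Y. T (\<lambda>x. f x + g x) y = T f y + T g y) \<and>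
     (\<forall>c. \<forall>f\<in>CX X. \<forall>y\<in>topspace Y. T (\<lambda>x. c * f x) y = c * T f y) \<and>
     (\<exists>M. \<forall>f\<in>CX X. supnorm Y (T f) \<le> M * supnorm X f)"

definition norm_le_one ::
  "'a topology \<Rightarrow> 'b topology \<Rightarrow> (('a \<Rightarrow> real) \<Rightarrow> ('b \<Rightarrow> real)) \<Rightarrow> bool" where
  "norm_le_one X Y T \<longleftrightarrow> (\<forall>f\<in>CX X. supnorm Y (T f) \<le> supnorm X f)"

definition extension_operator ::
  "'a topology \<Rightarrow> 'a set \<Rightarrow> (('a \<Rightarrow> real) \<Rightarrow> ('a \<Rightarrow> real)) \<Rightarrow> bool" where
  "extension_operator K F E \<longleftrightarrow>
     bounded_linear_op (subtopology K F) K E \<and>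
     (\<forall>f\<in>CX (subtopology K F). \<forall>x\<in>F. E f x = f x)"

definition regular_extension_operator ::
  "'a topology \<Rightarrow> 'a set \<Rightarrow> (('a \<Rightarrow> real) \<Rightarrow> ('a \<Rightarrow> real)) \<Rightarrow> bool" where
  "regular_extension_operator K F E \<longleftrightarrow>
     extension_operator K F E \<and> norm_le_one (subtopology K F) K E \<and>
     (\<forall>x\<in>topspace K. E (\<lambda>_. 1) x = 1)"

definition extension_property :: "'a topology \<Rightarrow> bool" where
  "extension_property K \<longleftrightarrow>
     (\<forall>F. closedin K F \<and> F \<noteq> {} \<longrightarrow> (\<exists>E. extension_operator K F E))"

definition regular_extension_property :: "'a topology \<Rightarrow> bool" where
  "regular_extension_property K \<longleftrightarrow>
     (\<forall>F. closedin K F \<and> F \<noteq> {} \<longrightarrow> (\<exists>E. regular_extension_operator K F E))"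

definition regular_averaging_operator ::
  "'a topology \<Rightarrow> 'b topology \<Rightarrow> ('a \<Rightarrow> 'b) \<Rightarrow> (('a \<Rightarrow> real) \<Rightarrow> ('b \<Rightarrow> real)) \<Rightarrow> bool" where
  "regular_averaging_operator K L \<phi> P \<longleftrightarrow>
     bounded_linear_op K L P \<and> norm_le_one K L P \<and>
     (\<forall>f\<in>CX L. \<forall>y\<in>topspace L. P (f \<circ> \<phi>) y = f y)"

end

theory Submission
  imports Defs
begin

text \<open>A regular averaging operator \<open>P\<close> is a unital contraction, hence positive, and with
  Urysohn's lemma this makes \<open>P h y\<close> depend only on the values of \<open>h\<close> on the fibre over \<open>y\<close>.
  Given a closed \<open>F \<subseteq> L\<close> and an extension operator \<open>E\<close> for its preimage \<open>G\<close> in \<open>K\<close>, the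
  operator \<open>f \<mapsto> P (E (f \<circ> \<phi>))\<close> is then an extension operator for \<open>F\<close> in \<open>L\<close>: for \<open>y \<in> F\<close>
  the function \<open>E (f \<circ> \<phi>)\<close> is constantly \<open>f y\<close> on the fibre over \<open>y\<close>. Norm at most one
  and preservation of \<open>1\<close> pass from \<open>E\<close> to this operator because \<open>P\<close> has both properties.\<close>

lemma continuous_map_real_bounded:
  assumes "compact_space X" "continuous_map X euclideanreal f"
  obtains B where "0 \<le> B" "\<forall>x\<in>topspace X. \<bar>f x\<bar> \<le> B"
proof -
  have "compactin euclideanreal (f ` topspace X)"
    using assms image_compactin compact_space_def by blast
  then have "bounded (f ` topspace X)"
    by (simp add: compact_imp_bounded)
  then obtain B where "\<forall>x\<in>topspace X. \<bar>f x\<bar> \<le> B"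
    by (auto simp: bounded_iff)
  then show ?thesis
    using that[of "max B 0"] by fastforce
qed

lemma supnorm_le:
  assumes "\<forall>x\<in>topspace X. \<bar>f x\<bar> \<le> B" "0 \<le> B"
  shows "supnorm X f \<le> B"
  using assms unfolding supnorm_def by (auto intro: cSUP_least)

lemma abs_le_supnorm:
  assumes "compact_space X" "continuous_map X euclideanreal f" "x \<in> topspace X"
  shows "\<bar>f x\<bar> \<le> supnorm X f"
proof -
  obtain B where "\<forall>x\<in>topspace X. \<bar>f x\<bar> \<le> B"
    using continuous_map_real_bounded assms by blast
  then have "bdd_above ((\<lambda>x. \<bar>f x\<bar>) ` topspace X)"
    by (auto intro: bdd_aboveI2)
  then show ?thesis
    using assms unfolding supnorm_def by (auto intro: cSUP_upper)
qed

lemma supnorm_nonneg: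
  assumes "compact_space X" "continuous_map X euclideanreal f"
  shows "0 \<le> supnorm X f"
proof (cases "topspace X = {}")
  case False
  then obtain x where "x \<in> topspace X" by blast
  then show ?thesis
    using abs_le_supnorm[OF assms] by (meson abs_ge_zero order_trans)
qed (simp add: supnorm_def)

lemma supnorm_comp_le:
  assumes "compact_space Y" "continuous_map X Y \<phi>" "continuous_map Y euclideanreal f"
  shows "supnorm X (f \<circ> \<phi>) \<le> supnorm Y f"
proof (rule supnorm_le)
  show "\<forall>x\<in>topspace X. \<bar>(f \<circ> \<phi>) x\<bar> \<le> supnorm Y f"
    using assms abs_le_supnorm continuous_map_image_subset_topspace by fastforce
qed (use assms supnorm_nonneg in blast)

lemma continuous_map_preimage_subtopology:
  assumes "continuous_map K L \<phi>"
  shows "continuous_map (subtopology K {x \<in> topspace K. \<phi> x \<in> F}) (subtopology L F) \<phi>"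
  by (rule continuous_map_into_subtopology)
     (auto intro: continuous_map_from_subtopology[OF assms])

lemma closedin_preimage_nonempty:
  assumes "continuous_map K L \<phi>" "\<phi> ` topspace K = topspace L" "closedin L F" "F \<noteq> {}"
  shows "closedin K {x \<in> topspace K. \<phi> x \<in> F} \<and> {x \<in> topspace K. \<phi> x \<in> F} \<noteq> {}"
proof
  show "closedin K {x \<in> topspace K. \<phi> x \<in> F}"
    using closedin_continuous_map_preimage[OF assms(1,3)] .
  obtain y where "y \<in> F"
    using assms(4) by blast
  moreover have "y \<in> \<phi> ` topspace K"
    using closedin_subset[OF assms(3)] assms(2) \<open>y \<in> F\<close> by blast
  ultimately show "{x \<in> topspace K. \<phi> x \<in> F} \<noteq> {}"
    by blast
qed

lemma bounded_linear_op_continuous: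
  "bounded_linear_op X Y T \<Longrightarrow> f \<in> CX X \<Longrightarrow> T f \<in> CX Y"
  unfolding bounded_linear_op_def by (elim conjE) blast

lemma bounded_linear_op_add:
  "bounded_linear_op X Y T \<Longrightarrow> f \<in> CX X \<Longrightarrow> g \<in> CX X \<Longrightarrow> y \<in> topspace Y \<Longrightarrow>
    T (\<lambda>x. f x + g x) y = T f y + T g y"
  unfolding bounded_linear_op_def by (elim conjE) blast

lemma bounded_linear_op_scale:
  "bounded_linear_op X Y T \<Longrightarrow> f \<in> CX X \<Longrightarrow> y \<in> topspace Y \<Longrightarrow>
    T (\<lambda>x. c * f x) y = c * T f y"
  unfolding bounded_linear_op_def by (elim conjE) blast

lemma bounded_linear_op_diff:
  assumes "bounded_linear_op X Y T" "f \<in> CX X" "g \<in> CX X" "y \<in> topspace Y"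
  shows "T (\<lambda>x. f x - g x) y = T f y - T g y"
proof -
  have minus_g: "(\<lambda>x. - 1 * g x) \<in> CX X"
    using assms(3) by (simp add: continuous_map_minus)
  have "T (\<lambda>x. f x + (\<lambda>x. - 1 * g x) x) y = T f y + T (\<lambda>x. - 1 * g x) y"
    by (rule bounded_linear_op_add[OF assms(1,2) minus_g assms(4)])
  also have "T (\<lambda>x. - 1 * g x) y = - 1 * T g y"
    by (rule bounded_linear_op_scale[OF assms(1,3,4)])
  finally show ?thesis by simp
qed

lemma bounded_linear_op_const:
  "bounded_linear_op X Y T \<Longrightarrow> y \<in> topspace Y \<Longrightarrow> T (\<lambda>_. c) y = c * T (\<lambda>_. 1) y"
  using bounded_linear_op_scale[of X Y T "\<lambda>_. 1" y c] by simp

lemma bounded_linear_op_bound: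
  assumes "bounded_linear_op X Y T" "compact_space X"
  obtains M where "\<And>f. f \<in> CX X \<Longrightarrow> supnorm Y (T f) \<le> M * supnorm X f" "0 \<le> M"
proof -
  have "\<exists>M. \<forall>f\<in>CX X. supnorm Y (T f) \<le> M * supnorm X f"
    using assms(1) unfolding bounded_linear_op_def by (elim conjE)
  then obtain M where M: "\<And>f. f \<in> CX X \<Longrightarrow> supnorm Y (T f) \<le> M * supnorm X f"
    by blast
  have "supnorm Y (T f) \<le> max M 0 * supnorm X f" if "f \<in> CX X" for f
  proof -
    have "M * supnorm X f \<le> max M 0 * supnorm X f"
      using supnorm_nonneg[OF assms(2)] that by (simp add: mult_right_mono)
    then show ?thesis
      using M[OF that] by linarith
  qed
  then show ?thesis
    using that[of "max M 0"] by simp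
qed

lemma unital_contraction_nonneg:
  assumes X: "compact_space X" and Y: "compact_space Y"
    and T: "bounded_linear_op X Y T" "norm_le_one X Y T" "\<forall>y\<in>topspace Y. T (\<lambda>_. 1) y = 1"
    and f: "f \<in> CX X" "\<forall>x\<in>topspace X. 0 \<le> f x" and y: "y \<in> topspace Y"
  shows "0 \<le> T f y"
proof -
  obtain B where B: "0 \<le> B" "\<forall>x\<in>topspace X. \<bar>f x\<bar> \<le> B"
    using continuous_map_real_bounded[OF X, of f] f(1) by auto
  define g where "g = (\<lambda>x. f x - B / 2)"
  have g: "g \<in> CX X"
    using f(1) by (auto simp: g_def intro!: continuous_intros)
  have "supnorm X g \<le> B / 2"
    by (rule supnorm_le) (use B f(2) in \<open>auto simp: g_def abs_if\<close>)
  moreover have "continuous_map Y euclideanreal (T g)"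
    using bounded_linear_op_continuous[OF T(1) g] by simp
  ultimately have "\<bar>T g y\<bar> \<le> B / 2"
    using abs_le_supnorm[OF Y _ y, of "T g"] T(2) g
    unfolding norm_le_one_def by fastforce
  moreover have "T f y = T g y + B / 2"
  proof -
    have "T f y = T (\<lambda>x. g x + (\<lambda>_. B / 2) x) y"
      by (simp add: g_def)
    also have "\<dots> = T g y + B / 2"
      using bounded_linear_op_add[OF T(1) g _ y] bounded_linear_op_const[OF T(1) y] T(3) y
      by simp
    finally show ?thesis .
  qed
  ultimately show ?thesis by linarith
qed

lemma unital_contraction_abs_le:
  assumes X: "compact_space X" and Y: "compact_space Y"
    and T: "bounded_linear_op X Y T" "norm_le_one X Y T" "\<forall>y\<in>topspace Y. T (\<lambda>_. 1) y = 1"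
    and h: "h \<in> CX X" and w: "w \<in> CX X" "\<forall>x\<in>topspace X. \<bar>h x\<bar> \<le> w x"
    and y: "y \<in> topspace Y"
  shows "\<bar>T h y\<bar> \<le> T w y"
proof -
  have "0 \<le> T (\<lambda>x. w x - h x) y"
    using w h by (intro unital_contraction_nonneg[OF X Y T _ _ y]) (auto intro!: continuous_intros)
  moreover have "0 \<le> T (\<lambda>x. w x + h x) y"
    using w h by (intro unital_contraction_nonneg[OF X Y T _ _ y]) (auto intro!: continuous_intros)
  ultimately show ?thesis
    using bounded_linear_op_diff[OF T(1) w(1) h y] bounded_linear_op_add[OF T(1) w(1) h y]
    by linarith
qed

lemma Urysohn_point_compactin:
  assumes "compact_space L" "Hausdorff_space L" "compactin L S" "y \<in> topspace L" "y \<notin> S"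
  obtains u where "continuous_map L euclideanreal u" "\<forall>z\<in>topspace L. 0 \<le> u z \<and> u z \<le> 1"
    "\<forall>z\<in>S. u z = 0" "u y = 1"
proof -
  have "normal_space L"
    using assms(1,2) compact_Hausdorff_or_regular_imp_normal_space by blast
  moreover have "closedin L S"
    using assms(2,3) compactin_imp_closedin by blast
  moreover have "closedin L {y}"
    using closedin_t1_singleton[OF Hausdorff_imp_t1_space[OF assms(2)] assms(4)] .
  moreover have "disjnt S {y}"
    using assms(5) by (simp add: disjnt_def)
  ultimately obtain u :: "_ \<Rightarrow> real"
    where "continuous_map L (top_of_set {0..1}) u" "u ` S \<subseteq> {0}" "u ` {y} \<subseteq> {1}"
    using Urysohn_lemma[of L S "{y}" 0 1] by auto
  then show ?thesis
    using that[of u] by (auto simp: continuous_map_in_subtopology Pi_iff)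
qed

locale regular_averaging =
  fixes K :: "'a topology" and L :: "'b topology" and \<phi> :: "'a \<Rightarrow> 'b"
    and P :: "('a \<Rightarrow> real) \<Rightarrow> ('b \<Rightarrow> real)"
  assumes compact_K: "compact_space K" and compact_L: "compact_space L"
    and Hausdorff_L: "Hausdorff_space L"
    and continuous_\<phi>: "continuous_map K L \<phi>"
    and averaging: "regular_averaging_operator K L \<phi> P"
begin

lemma bounded_linear_P: "bounded_linear_op K L P"
  using averaging unfolding regular_averaging_operator_def by (elim conjE)

lemma norm_le_one_P: "norm_le_one K L P"
  using averaging unfolding regular_averaging_operator_def by (elim conjE)

lemma P_comp: "u \<in> CX L \<Longrightarrow> y \<in> topspace L \<Longrightarrow> P (u \<circ> \<phi>) y = u y"
  using averaging unfolding regular_averaging_operator_def by (elim conjE) blast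

lemma P_one: "\<forall>y\<in>topspace L. P (\<lambda>_. 1) y = 1"
  using P_comp[of "\<lambda>_. 1"] by (simp add: o_def)

lemma P_const: "y \<in> topspace L \<Longrightarrow> P (\<lambda>_. c) y = c"
  using bounded_linear_op_const[OF bounded_linear_P] P_one by simp

lemma abs_P_le:
  "h \<in> CX K \<Longrightarrow> w \<in> CX K \<Longrightarrow> \<forall>x\<in>topspace K. \<bar>h x\<bar> \<le> w x \<Longrightarrow> y \<in> topspace L \<Longrightarrow>
    \<bar>P h y\<bar> \<le> P w y"
  using unital_contraction_abs_le[OF compact_K compact_L bounded_linear_P norm_le_one_P P_one]
  by blast

text \<open>The value of \<open>P h\<close> at \<open>y\<close> only depends on \<open>h\<close> near the fibre over \<open>y\<close>: the Urysohn
  function \<open>u\<close> separates \<open>y\<close> from the image of the set where \<open>h\<close> is large, and \<open>P\<close> fixes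
  \<open>u \<circ> \<phi>\<close>.\<close>
lemma abs_P_le_if_small_on_fibre:
  assumes h: "h \<in> CX K" and y: "y \<in> topspace L" and e: "0 < e"
    and small: "\<forall>x\<in>topspace K. \<phi> x = y \<longrightarrow> \<bar>h x\<bar> < e"
  shows "\<bar>P h y\<bar> \<le> e"
proof -
  obtain B where B: "0 \<le> B" "\<forall>x\<in>topspace K. \<bar>h x\<bar> \<le> B"
    using continuous_map_real_bounded[OF compact_K, of h] h by auto
  define C where "C = {x \<in> topspace K. \<bar>h x\<bar> \<in> {e..}}"
  have "closedin K C"
    unfolding C_def using h
    by (intro closedin_continuous_map_preimage) (auto intro!: continuous_intros simp flip: closed_closedin)
  then have "compactin L (\<phi> ` C)"
    using closedin_compact_space[OF compact_K] image_compactin continuous_\<phi> by blast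
  moreover have "y \<notin> \<phi> ` C"
    using small unfolding C_def by fastforce
  ultimately obtain u where u: "continuous_map L euclideanreal u"
    "\<forall>z\<in>topspace L. 0 \<le> u z \<and> u z \<le> 1" "\<forall>z\<in>\<phi> ` C. u z = 0" "u y = 1"
    using Urysohn_point_compactin[OF compact_L Hausdorff_L _ y] by blast
  define v where "v = u \<circ> \<phi>"
  have v: "v \<in> CX K"
    using continuous_map_compose[OF continuous_\<phi> u(1)] by (simp add: v_def)
  define w where "w = (\<lambda>x. e + B - B * v x)"
  have Bv: "(\<lambda>x. B * v x) \<in> CX K"
    using v by (auto intro!: continuous_intros)
  have w: "w \<in> CX K"
    using v unfolding w_def by (auto intro!: continuous_intros)
  have "\<bar>h x\<bar> \<le> w x" if x: "x \<in> topspace K" for x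
  proof (cases "x \<in> C")
    case True
    then show ?thesis using B x u(3) e by (force simp: w_def v_def)
  next
    case False
    have "B * u (\<phi> x) \<le> B"
      using u(2) continuous_map_image_subset_topspace[OF continuous_\<phi>] x B(1)
      by (simp add: image_subset_iff mult_left_le)
    then show ?thesis using False x unfolding C_def w_def v_def by auto
  qed
  moreover have "P w y = e"
  proof -
    have "P w y = P (\<lambda>_. e + B) y - P (\<lambda>x. B * v x) y"
      unfolding w_def using bounded_linear_op_diff[OF bounded_linear_P _ Bv y, of "\<lambda>_. e + B"]
      by simp
    also have "\<dots> = e"
      using P_const[OF y] bounded_linear_op_scale[OF bounded_linear_P v y] P_comp[OF _ y] u(1,4)
      by (simp add: v_def)
    finally show ?thesis .
  qed
  ultimately show ?thesis
    using abs_P_le[OF h w _ y] by simp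
qed

lemma P_eq_0_if_vanishes_on_fibre:
  assumes h: "h \<in> CX K" and y: "y \<in> topspace L"
    and vanish: "\<forall>x\<in>topspace K. \<phi> x = y \<longrightarrow> h x = 0"
  shows "P h y = 0"
proof (rule ccontr)
  assume "P h y \<noteq> 0"
  then have "\<bar>P h y\<bar> \<le> \<bar>P h y\<bar> / 2"
    using vanish by (intro abs_P_le_if_small_on_fibre[OF h y]) auto
  with \<open>P h y \<noteq> 0\<close> show False by simp
qed

text \<open>Besides giving the extension property, this lets \<open>P\<close> ignore the values of its argument
  outside \<open>topspace K\<close>, where operators such as \<open>E\<close> below are unconstrained.\<close>
lemma P_cong:
  assumes "a \<in> CX K" "b \<in> CX K" "y \<in> topspace L"
    and "\<forall>x\<in>topspace K. \<phi> x = y \<longrightarrow> a x = b x"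
  shows "P a y = P b y"
proof -
  have "P (\<lambda>x. a x - b x) y = 0"
    using assms by (intro P_eq_0_if_vanishes_on_fibre) (auto intro!: continuous_intros)
  then show ?thesis
    using bounded_linear_op_diff[OF bounded_linear_P assms(1-3)] by simp
qed

end

definition averaged_extension ::
  "('a \<Rightarrow> 'b) \<Rightarrow> (('a \<Rightarrow> real) \<Rightarrow> ('b \<Rightarrow> real)) \<Rightarrow> (('a \<Rightarrow> real) \<Rightarrow> ('a \<Rightarrow> real))
    \<Rightarrow> ('b \<Rightarrow> real) \<Rightarrow> ('b \<Rightarrow> real)" where
  "averaged_extension \<phi> P E f = P (E (f \<circ> \<phi>))"

context regular_averaging
begin

context
  fixes F :: "'b set" and E :: "('a \<Rightarrow> real) \<Rightarrow> ('a \<Rightarrow> real)"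
  assumes closed_F: "closedin L F"
    and extension_E: "extension_operator K {x \<in> topspace K. \<phi> x \<in> F} E"
begin

abbreviation "G \<equiv> {x \<in> topspace K. \<phi> x \<in> F}"

lemma bounded_linear_E: "bounded_linear_op (subtopology K G) K E"
  using extension_E unfolding extension_operator_def by blast

lemma compact_space_G: "compact_space (subtopology K G)"
  using closedin_compact_space[OF compact_K closedin_continuous_map_preimage[OF continuous_\<phi> closed_F]]
    compact_space_subtopology by blast

lemma compact_space_F: "compact_space (subtopology L F)"
  using closedin_compact_space[OF compact_L closed_F] compact_space_subtopology by blast

lemma comp_\<phi>_continuous: "f \<in> CX (subtopology L F) \<Longrightarrow> f \<circ> \<phi> \<in> CX (subtopology K G)"
  using continuous_map_compose[OF continuous_map_preimage_subtopology[OF continuous_\<phi>]] by blast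

lemma E_comp_\<phi>_continuous: "f \<in> CX (subtopology L F) \<Longrightarrow> E (f \<circ> \<phi>) \<in> CX K"
  using bounded_linear_op_continuous[OF bounded_linear_E comp_\<phi>_continuous] .

lemma averaged_extension_add:
  assumes f: "f \<in> CX (subtopology L F)" and g: "g \<in> CX (subtopology L F)" and y: "y \<in> topspace L"
  shows "averaged_extension \<phi> P E (\<lambda>x. f x + g x) y
    = averaged_extension \<phi> P E f y + averaged_extension \<phi> P E g y"
proof -
  have "(\<lambda>x. f x + g x) \<circ> \<phi> = (\<lambda>x. (f \<circ> \<phi>) x + (g \<circ> \<phi>) x)"
    by (simp add: o_def)
  moreover have "E (\<lambda>x. (f \<circ> \<phi>) x + (g \<circ> \<phi>) x) x = E (f \<circ> \<phi>) x + E (g \<circ> \<phi>) x"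
    if "x \<in> topspace K" for x
    using bounded_linear_op_add[OF bounded_linear_E comp_\<phi>_continuous[OF f]
        comp_\<phi>_continuous[OF g] that] .
  moreover have "E ((\<lambda>x. f x + g x) \<circ> \<phi>) \<in> CX K"
    using f g by (intro E_comp_\<phi>_continuous) (auto intro!: continuous_intros)
  ultimately have "P (E ((\<lambda>x. f x + g x) \<circ> \<phi>)) y = P (\<lambda>x. E (f \<circ> \<phi>) x + E (g \<circ> \<phi>) x) y"
    using E_comp_\<phi>_continuous[OF f] E_comp_\<phi>_continuous[OF g] y
    by (intro P_cong) (auto intro!: continuous_intros)
  then show ?thesis
    using bounded_linear_op_add[OF bounded_linear_P E_comp_\<phi>_continuous[OF f]
        E_comp_\<phi>_continuous[OF g] y]
    by (simp add: averaged_extension_def)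
qed

lemma averaged_extension_scale:
  assumes f: "f \<in> CX (subtopology L F)" and y: "y \<in> topspace L"
  shows "averaged_extension \<phi> P E (\<lambda>x. c * f x) y = c * averaged_extension \<phi> P E f y"
proof -
  have "(\<lambda>x. c * f x) \<circ> \<phi> = (\<lambda>x. c * (f \<circ> \<phi>) x)"
    by (simp add: o_def)
  moreover have "E (\<lambda>x. c * (f \<circ> \<phi>) x) x = c * E (f \<circ> \<phi>) x" if "x \<in> topspace K" for x
    using bounded_linear_op_scale[OF bounded_linear_E comp_\<phi>_continuous[OF f] that] .
  moreover have "E ((\<lambda>x. c * f x) \<circ> \<phi>) \<in> CX K"
    using f by (intro E_comp_\<phi>_continuous) (auto intro!: continuous_intros)
  ultimately have "P (E ((\<lambda>x. c * f x) \<circ> \<phi>)) y = P (\<lambda>x. c * E (f \<circ> \<phi>) x) y"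
    using E_comp_\<phi>_continuous[OF f] y by (intro P_cong) (auto intro!: continuous_intros)
  then show ?thesis
    using bounded_linear_op_scale[OF bounded_linear_P E_comp_\<phi>_continuous[OF f] y]
    by (simp add: averaged_extension_def)
qed

lemma supnorm_averaged_extension_le:
  "f \<in> CX (subtopology L F) \<Longrightarrow>
    supnorm L (averaged_extension \<phi> P E f) \<le> supnorm K (E (f \<circ> \<phi>))"
  using norm_le_one_P E_comp_\<phi>_continuous unfolding norm_le_one_def averaged_extension_def by blast

lemma supnorm_comp_\<phi>_le:
  "f \<in> CX (subtopology L F) \<Longrightarrow> supnorm (subtopology K G) (f \<circ> \<phi>) \<le> supnorm (subtopology L F) f"
  using supnorm_comp_le[OF compact_space_F continuous_map_preimage_subtopology[OF continuous_\<phi>]]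
  by blast

lemma bounded_linear_averaged_extension:
  "bounded_linear_op (subtopology L F) L (averaged_extension \<phi> P E)"
proof -
  obtain M where M: "\<And>f. f \<in> CX (subtopology K G) \<Longrightarrow>
      supnorm K (E f) \<le> M * supnorm (subtopology K G) f" "0 \<le> M"
    using bounded_linear_op_bound[OF bounded_linear_E compact_space_G] by blast
  have "supnorm L (averaged_extension \<phi> P E f) \<le> M * supnorm (subtopology L F) f"
    if f: "f \<in> CX (subtopology L F)" for f
  proof -
    have "supnorm L (averaged_extension \<phi> P E f) \<le> supnorm K (E (f \<circ> \<phi>))"
      using supnorm_averaged_extension_le[OF f] .
    also have "\<dots> \<le> M * supnorm (subtopology K G) (f \<circ> \<phi>)"
      using M(1)[OF comp_\<phi>_continuous[OF f]] .
    also have "\<dots> \<le> M * supnorm (subtopology L F) f"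
      using supnorm_comp_\<phi>_le[OF f] M(2) by (rule mult_left_mono)
    finally show ?thesis .
  qed
  then show ?thesis
    unfolding bounded_linear_op_def
    using averaged_extension_add averaged_extension_scale E_comp_\<phi>_continuous
      bounded_linear_op_continuous[OF bounded_linear_P]
    by (auto simp: averaged_extension_def)
qed

lemma averaged_extension_extends:
  assumes f: "f \<in> CX (subtopology L F)" and y: "y \<in> F"
  shows "averaged_extension \<phi> P E f y = f y"
proof -
  have "y \<in> topspace L"
    using closed_F closedin_subset y by blast
  moreover have "E (f \<circ> \<phi>) x = f y" if "x \<in> topspace K" "\<phi> x = y" for x
    using extension_E comp_\<phi>_continuous[OF f] that y
    unfolding extension_operator_def by auto
  ultimately have "P (E (f \<circ> \<phi>)) y = P (\<lambda>_. f y) y"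
    using f by (intro P_cong E_comp_\<phi>_continuous) auto
  then show ?thesis
    using P_const \<open>y \<in> topspace L\<close> by (simp add: averaged_extension_def)
qed

lemma extension_operator_averaged_extension:
  "extension_operator L F (averaged_extension \<phi> P E)"
  using bounded_linear_averaged_extension averaged_extension_extends
  unfolding extension_operator_def by blast

lemma regular_extension_operator_averaged_extension:
  assumes regular: "regular_extension_operator K G E"
  shows "regular_extension_operator L F (averaged_extension \<phi> P E)"
proof -
  have "supnorm L (averaged_extension \<phi> P E f) \<le> supnorm (subtopology L F) f"
    if f: "f \<in> CX (subtopology L F)" for f
  proof -
    have "supnorm L (averaged_extension \<phi> P E f) \<le> supnorm K (E (f \<circ> \<phi>))"
      using supnorm_averaged_extension_le[OF f] .
    also have "\<dots> \<le> supnorm (subtopology K G) (f \<circ> \<phi>)"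
      using regular comp_\<phi>_continuous[OF f] unfolding regular_extension_operator_def norm_le_one_def
      by blast
    also have "\<dots> \<le> supnorm (subtopology L F) f"
      using supnorm_comp_\<phi>_le[OF f] .
    finally show ?thesis .
  qed
  moreover have "averaged_extension \<phi> P E (\<lambda>_. 1) y = 1" if y: "y \<in> topspace L" for y
  proof -
    have "P (E (\<lambda>_. 1)) y = P (\<lambda>_. 1) y"
      using regular bounded_linear_op_continuous[OF bounded_linear_E, of "\<lambda>_. 1"] y
      unfolding regular_extension_operator_def by (intro P_cong) auto
    then show ?thesis
      using P_one y by (simp add: averaged_extension_def o_def)
  qed
  ultimately show ?thesis
    using extension_operator_averaged_extension
    unfolding regular_extension_operator_def norm_le_one_def by blast
qed

end

lemma extension_property_image:
  assumes surj: "\<phi> ` topspace K = topspace L" and ext_K: "extension_property K"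
  shows "extension_property L"
  unfolding extension_property_def
proof (intro allI impI)
  fix F assume F: "closedin L F \<and> F \<noteq> {}"
  then obtain E where "extension_operator K {x \<in> topspace K. \<phi> x \<in> F} E"
    using ext_K closedin_preimage_nonempty[OF continuous_\<phi> surj] unfolding extension_property_def
    by meson
  then show "\<exists>E. extension_operator L F E"
    using extension_operator_averaged_extension F by meson
qed

lemma regular_extension_property_image:
  assumes surj: "\<phi> ` topspace K = topspace L" and reg_K: "regular_extension_property K"
  shows "regular_extension_property L"
  unfolding regular_extension_property_def
proof (intro allI impI)
  fix F assume F: "closedin L F \<and> F \<noteq> {}"
  then obtain E where "regular_extension_operator K {x \<in> topspace K. \<phi> x \<in> F} E"
    using reg_K closedin_preimage_nonempty[OF continuous_\<phi> surj]
    unfolding regular_extension_property_def by meson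
  then show "\<exists>E. regular_extension_operator L F E"
    using regular_extension_operator_averaged_extension F
    unfolding regular_extension_operator_def by meson
qed

end

theorem proposition3p5:
  fixes K :: "'a topology" and L :: "'b topology" and \<phi> :: "'a \<Rightarrow> 'b"
  assumes "compact_space K" and "Hausdorff_space K"
    and "compact_space L" and "Hausdorff_space L"
    and "continuous_map K L \<phi>" and "\<phi> ` topspace K = topspace L"
    and "\<exists>P. regular_averaging_operator K L \<phi> P"
  shows "(extension_property K \<longrightarrow> extension_property L) \<and>
         (regular_extension_property K \<longrightarrow> regular_extension_property L)"
proof -
  obtain P where "regular_averaging_operator K L \<phi> P"
    using assms(7) by blast
  then interpret regular_averaging K L \<phi> P
    using assms by unfold_locales
  show ?thesis
    using extension_property_image regular_extension_property_image assms(6) by blast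
qed

end
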